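(* Let $I=I_{\mathbf a,\mathbf b}\subset S=K[x,y]$ be a nonzero proper monomial ideal. Then $$\mathrm{v}(I)=\begin{cases}\min\{a_i+b_{i+1}-2: 1\le i\le m-1\}, & \text{if } b_1=0 \text{ and } a_m=0,\\ \min\{a_1+b_1-1,\ a_i+b_{i+1}-2: 1\le i\le m-1\}, & \text{if } b_1\ne0\text{ and } a_m=0,\\ \min\{a_m+b_m-1,\ a_i+b_{i+1}-2: 1\le i\le m-1\}, & \text{if } b_1=0\text{ and } a_m\ne0,\\ \min\{a_1+b_1-1,\ a_m+b_m-1,\ a_i+b_{i+1}-2: 1\le i\le m-1\}, & \text{otherwise}.\end{cases}$$ (When $m=1$ the terms $a_i+b_{i+1}-2$ are absent.)
   Context: $S=K[x,y]$ over a field $K$, standard graded, $S_d$ its degree-$d$ component. Every nonzero monomial ideal $I$ of $S$ has minimal monomial generating set $\{x^{a_1}y^{b_1},\dots,x^{a_m}y^{b_m}\}$ with $a_1>\dots>a_m\ge0$ and $0\le b_1<\dots<b_m$; this is denoted $I=I_{\mathbf a,\mathbf b}$. For a graded ideal $J$, $\mathrm{v}(J)=\min\{d:\exists f\in S_d\text{ with }(J:f)\in\operatorname{Ass}(J)\}$. *)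

theory Defs
  imports "HOL-Computational_Algebra.Polynomial"
begin

text \<open>S = K[x,y] is represented as (K[x])[y], i.e. the type 'k poly poly:
  the outer variable is y, the inner variable is x.\<close>

definition xy_monom :: "nat \<Rightarrow> nat \<Rightarrow> 'k::field poly poly" where
  "xy_monom a b = monom (monom 1 a) b"

text \<open>Homogeneous of total degree d (the zero polynomial lies in every S_d).\<close>
definition homog :: "nat \<Rightarrow> 'k::field poly poly \<Rightarrow> bool" where
  "homog d f \<longleftrightarrow> (\<forall>i j. coeff (coeff f j) i \<noteq> 0 \<longrightarrow> i + j = d)"

definition is_ideal :: "'k::field poly poly set \<Rightarrow> bool" where
  "is_ideal I \<longleftrightarrow> 0 \<in> I \<and> (\<forall>p\<in>I. \<forall>q\<in>I. p + q \<in> I) \<and> (\<forall>r. \<forall>p\<in>I. r * p \<in> I)"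

definition ideal_gen :: "'k::field poly poly set \<Rightarrow> 'k poly poly set" where
  "ideal_gen G = \<Inter>{J. is_ideal J \<and> G \<subseteq> J}"

definition colon :: "'k::field poly poly set \<Rightarrow> 'k poly poly \<Rightarrow> 'k poly poly set" where
  "colon J f = {g. g * f \<in> J}"

definition is_prime_ideal :: "'k::field poly poly set \<Rightarrow> bool" where
  "is_prime_ideal P \<longleftrightarrow> is_ideal P \<and> P \<noteq> UNIV \<and> (\<forall>p q. p * q \<in> P \<longrightarrow> p \<in> P \<or> q \<in> P)"

definition Ass :: "'k::field poly poly set \<Rightarrow> 'k poly poly set set" where
  "Ass J = {P. is_prime_ideal P \<and> (\<exists>f. P = colon J f)}"

definition vnum :: "'k::field poly poly set \<Rightarrow> nat" where
  "vnum J = (LEAST d. \<exists>f. homog d f \<and> colon J f \<in> Ass J)"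

end

theory Submission
  imports Defs
begin

text \<open>A polynomial lies in the monomial ideal I exactly when its support lies in the staircase
  of exponents of I. The only primes that can occur as (I : f) are (x,y), (x) and (y), and
  (I : f) contains x resp. y exactly when x f resp. y f lies in I. Hence the witnesses f of
  minimal degree are monomials just below the staircase: the inner corners
  x^(a_i - 1) y^(b_(i+1) - 1), which give (x,y), and the two ends x^(a_1) y^(b_1 - 1) and
  x^(a_m - 1) y^(b_m), which give (y) and (x) when b_1 > 0 resp. a_m > 0. Conversely, for every
  f with (I : f) prime, one of these degrees is at most deg f.\<close>

lemma coeff_xy_monom:
  "coeff (coeff (xy_monom s t :: 'k::field poly poly) j) i = (if i = s \<and> j = t then 1 else 0)"
  unfolding xy_monom_def by simp

lemma coeff_xy_monom_mult:
  "coeff (coeff (xy_monom s t * f) j) i =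
     (if s \<le> i \<and> t \<le> j then coeff (coeff f (j - t)) (i - s) else (0::'k::field))"
  unfolding xy_monom_def by (simp add: coeff_monom_mult)

lemma xy_monom_eq_power:
  "(xy_monom s t :: 'k::field poly poly) = xy_monom 1 0 ^ s * xy_monom 0 1 ^ t"
  unfolding xy_monom_def by (simp add: monom_power mult_monom)

lemma homog_xy_monom: "homog (s + t) (xy_monom s t :: 'k::field poly poly)"
  unfolding homog_def by (simp add: coeff_xy_monom)

lemma coeff_mult_nonzero_imp_below:
  fixes r p :: "'k::field poly poly"
  assumes "coeff (coeff (r * p) j) i \<noteq> 0"
  shows "\<exists>i'\<le>i. \<exists>j'\<le>j. coeff (coeff p j') i' \<noteq> 0"
proof (rule ccontr)
  assume "\<not> ?thesis"
  then have "(\<Sum>k\<le>j. \<Sum>l\<le>i. coeff (coeff r k) l * coeff (coeff p (j - k)) (i - l)) = 0"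
    by (intro sum.neutral ballI) auto
  then show False
    using assms by (simp add: coeff_mult coeff_sum)
qed


subsection \<open>Ideals, colon ideals and primes\<close>

lemma is_ideal_ideal_gen: "is_ideal (ideal_gen G)"
  unfolding ideal_gen_def is_ideal_def by auto

lemma ideal_gen_superset: "G \<subseteq> ideal_gen G"
  unfolding ideal_gen_def by auto

lemma ideal_gen_least: "is_ideal J \<Longrightarrow> G \<subseteq> J \<Longrightarrow> ideal_gen G \<subseteq> J"
  unfolding ideal_gen_def by auto

lemma ideal_mult_mem: "is_ideal J \<Longrightarrow> p \<in> J \<Longrightarrow> r * p \<in> J"
  by (simp add: is_ideal_def)

lemma ideal_sum_mem:
  assumes "is_ideal J" "finite A" "\<And>x. x \<in> A \<Longrightarrow> g x \<in> J"
  shows "sum g A \<in> J"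
  using assms(2,3) by (induction A rule: finite_induct) (use assms(1) in \<open>auto simp: is_ideal_def\<close>)

lemma ideal_subset_colon: "is_ideal J \<Longrightarrow> J \<subseteq> colon J f"
  using ideal_mult_mem[of J _ f] unfolding colon_def by (auto simp: mult.commute)

lemma colon_eq_UNIV: "is_ideal J \<Longrightarrow> f \<in> J \<Longrightarrow> colon J f = UNIV"
  unfolding colon_def by (auto intro: ideal_mult_mem)

lemma prime_ideal_one_notin: "is_prime_ideal P \<Longrightarrow> 1 \<notin> P"
  unfolding is_prime_ideal_def is_ideal_def by (metis UNIV_eq_I mult.right_neutral)

lemma prime_ideal_power_mem_iff:
  assumes "is_prime_ideal P"
  shows "p ^ n \<in> P \<longleftrightarrow> 0 < n \<and> p \<in> P"
proof (induction n)
  case 0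
  then show ?case using prime_ideal_one_notin[OF assms] by simp
next
  case (Suc n)
  have "p * p ^ n \<in> P \<longleftrightarrow> p \<in> P \<or> p ^ n \<in> P"
    using assms unfolding is_prime_ideal_def is_ideal_def by (metis mult.commute)
  then show ?case using Suc by auto
qed

lemma xy_monom_mem_prime_ideal_iff:
  assumes "is_prime_ideal P"
  shows "xy_monom s t \<in> P \<longleftrightarrow> (0 < s \<and> xy_monom 1 0 \<in> P) \<or> (0 < t \<and> xy_monom 0 1 \<in> P)"
proof -
  have "xy_monom s t \<in> P \<longleftrightarrow> xy_monom 1 0 ^ s \<in> P \<or> xy_monom 0 1 ^ t \<in> P"
    using assms unfolding xy_monom_eq_power[of s t] is_prime_ideal_def is_ideal_def
    by (metis mult.commute)
  then show ?thesis
    using prime_ideal_power_mem_iff[OF assms] by simp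
qed


subsection \<open>Monomial ideals\<close>

definition upward_closed :: "(nat \<Rightarrow> nat \<Rightarrow> bool) \<Rightarrow> bool" where
  "upward_closed U \<longleftrightarrow> (\<forall>i j i' j'. U i j \<longrightarrow> i \<le> i' \<longrightarrow> j \<le> j' \<longrightarrow> U i' j')"

text \<open>\<open>U i j\<close> says that x^i y^j lies in the ideal.\<close>

definition monomial_ideal :: "(nat \<Rightarrow> nat \<Rightarrow> bool) \<Rightarrow> 'k::field poly poly set" where
  "monomial_ideal U = {f. \<forall>i j. coeff (coeff f j) i \<noteq> 0 \<longrightarrow> U i j}"

lemma upward_closedD: "upward_closed U \<Longrightarrow> U i j \<Longrightarrow> i \<le> i' \<Longrightarrow> j \<le> j' \<Longrightarrow> U i' j'"
  unfolding upward_closed_def by blast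

lemma is_ideal_monomial_ideal:
  assumes "upward_closed U"
  shows "is_ideal (monomial_ideal U :: 'k::field poly poly set)"
  unfolding is_ideal_def
proof (intro conjI ballI allI)
  show "(0::'k poly poly) \<in> monomial_ideal U"
    by (simp add: monomial_ideal_def)
next
  fix p q :: "'k poly poly"
  assume "p \<in> monomial_ideal U" "q \<in> monomial_ideal U"
  then show "p + q \<in> monomial_ideal U"
    unfolding monomial_ideal_def by force
next
  fix r p :: "'k poly poly"
  assume p: "p \<in> monomial_ideal U"
  show "r * p \<in> monomial_ideal U"
    unfolding monomial_ideal_def
  proof (intro CollectI allI impI)
    fix i j
    assume "coeff (coeff (r * p) j) i \<noteq> 0"
    then obtain i' j' where "i' \<le> i" "j' \<le> j" "coeff (coeff p j') i' \<noteq> 0"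
      using coeff_mult_nonzero_imp_below by blast
    then show "U i j"
      using p assms upward_closedD unfolding monomial_ideal_def by blast
  qed
qed

lemma monomial_ideal_eq_UNIV_iff:
  assumes "upward_closed U"
  shows "(monomial_ideal U :: 'k::field poly poly set) = UNIV \<longleftrightarrow> U 0 0"
proof
  assume "monomial_ideal U = (UNIV :: 'k poly poly set)"
  then have "(1 :: 'k poly poly) \<in> monomial_ideal U" by simp
  then show "U 0 0" by (simp add: monomial_ideal_def)
next
  assume "U 0 0"
  then show "monomial_ideal U = (UNIV :: 'k poly poly set)"
    using upward_closedD[OF assms] unfolding monomial_ideal_def by blast
qed

lemma xy_monom_mult_mem_monomial_ideal_iff:
  "xy_monom s t * f \<in> monomial_ideal U \<longleftrightarrow>
     (\<forall>i j. coeff (coeff f j) i \<noteq> (0::'k::field) \<longrightarrow> U (i + s) (j + t))"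
proof
  assume H: "xy_monom s t * f \<in> monomial_ideal U"
  show "\<forall>i j. coeff (coeff f j) i \<noteq> 0 \<longrightarrow> U (i + s) (j + t)"
  proof (intro allI impI)
    fix i j
    assume "coeff (coeff f j) i \<noteq> 0"
    then have "coeff (coeff (xy_monom s t * f) (j + t)) (i + s) \<noteq> 0"
      by (simp add: coeff_xy_monom_mult)
    then show "U (i + s) (j + t)"
      using H by (simp add: monomial_ideal_def)
  qed
next
  assume H: "\<forall>i j. coeff (coeff f j) i \<noteq> 0 \<longrightarrow> U (i + s) (j + t)"
  show "xy_monom s t * f \<in> monomial_ideal U"
    unfolding monomial_ideal_def
  proof (intro CollectI allI impI)
    fix i j
    assume "coeff (coeff (xy_monom s t * f) j) i \<noteq> 0"
    then have "s \<le> i" "t \<le> j" "coeff (coeff f (j - t)) (i - s) \<noteq> 0"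
      by (auto simp: coeff_xy_monom_mult split: if_splits)
    then show "U i j"
      using H by (metis le_add_diff_inverse2)
  qed
qed

lemma mem_colon_xy_monom_iff:
  "g \<in> colon (monomial_ideal U) (xy_monom s t) \<longleftrightarrow>
     (\<forall>i j. coeff (coeff g j) i \<noteq> (0::'k::field) \<longrightarrow> U (i + s) (j + t))"
  unfolding colon_def by (simp add: mult.commute[of g] xy_monom_mult_mem_monomial_ideal_iff)

lemma xy_monom_mem_colon_iff:
  "xy_monom s t \<in> colon (monomial_ideal U) f \<longleftrightarrow>
     (\<forall>i j. coeff (coeff f j) i \<noteq> (0::'k::field) \<longrightarrow> U (i + s) (j + t))"
  by (simp add: colon_def xy_monom_mult_mem_monomial_ideal_iff)

lemma ideal_gen_xy_monoms:
  "ideal_gen {xy_monom (s k) (t k) | k. k \<in> K} =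
     (monomial_ideal (\<lambda>i j. \<exists>k\<in>K. s k \<le> i \<and> t k \<le> j) :: 'k::field poly poly set)"
  (is "ideal_gen ?G = monomial_ideal ?U")
proof
  show "ideal_gen ?G \<subseteq> monomial_ideal ?U"
  proof (rule ideal_gen_least)
    have "upward_closed ?U"
      unfolding upward_closed_def by (meson order_trans)
    then show "is_ideal (monomial_ideal ?U :: 'k poly poly set)"
      by (rule is_ideal_monomial_ideal)
    show "?G \<subseteq> monomial_ideal ?U"
    proof (intro subsetI, elim CollectE exE conjE)
      fix g k
      assume g: "g = xy_monom (s k) (t k)" and k: "k \<in> K"
      show "g \<in> monomial_ideal ?U"
        unfolding monomial_ideal_def
      proof (intro CollectI allI impI)
        fix i j
        assume "coeff (coeff g j) i \<noteq> 0"
        then have "i = s k" "j = t k"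
          unfolding g coeff_xy_monom by (simp_all split: if_splits)
        then show "?U i j"
          using k by blast
      qed
    qed
  qed
next
  have monom_mem: "monom (monom c i) j \<in> ideal_gen ?G" if U: "?U i j" for c i j
  proof -
    obtain k where k: "k \<in> K" "s k \<le> i" "t k \<le> j"
      using U by blast
    have "xy_monom (s k) (t k) \<in> ideal_gen ?G"
      by (rule subsetD[OF ideal_gen_superset]) (use k(1) in blast)
    then have "monom (monom c (i - s k)) (j - t k) * xy_monom (s k) (t k) \<in> ideal_gen ?G"
      by (rule ideal_mult_mem[OF is_ideal_ideal_gen])
    then show ?thesis
      using k by (simp add: xy_monom_def mult_monom)
  qed
  show "monomial_ideal ?U \<subseteq> ideal_gen ?G"
  proof
    fix f :: "'k poly poly"
    assume f: "f \<in> monomial_ideal ?U"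
    have "f = (\<Sum>j\<le>degree f. \<Sum>i\<le>degree (coeff f j). monom (monom (coeff (coeff f j) i) i) j)"
      by (simp add: poly_as_sum_of_monoms monom_sum[symmetric])
    also have "\<dots> \<in> ideal_gen ?G"
    proof (intro ideal_sum_mem[OF is_ideal_ideal_gen] finite_atMost)
      fix j i
      show "monom (monom (coeff (coeff f j) i) i) j \<in> ideal_gen ?G"
      proof (cases "coeff (coeff f j) i = 0")
        case True
        then show ?thesis
          using is_ideal_ideal_gen[of ?G] by (simp add: is_ideal_def)
      next
        case False
        then show ?thesis
          using f monom_mem unfolding monomial_ideal_def by blast
      qed
    qed
    finally show "f \<in> ideal_gen ?G" .
  qed
qed


subsection \<open>The primes (x, y), (x) and (y)\<close>

definition ideal_xy :: "'k::field poly poly set" where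
  "ideal_xy = {g. coeff (coeff g 0) 0 = 0}"

definition ideal_y :: "'k::field poly poly set" where
  "ideal_y = {g. coeff g 0 = 0}"

definition subst_x_zero :: "'k::field poly poly \<Rightarrow> 'k poly" where
  "subst_x_zero g = map_poly (\<lambda>q. coeff q 0) g"

definition ideal_x :: "'k::field poly poly set" where
  "ideal_x = {g. subst_x_zero g = 0}"

lemma coeff_subst_x_zero: "coeff (subst_x_zero g) j = coeff (coeff g j) 0"
  unfolding subst_x_zero_def by (simp add: coeff_map_poly)

lemma subst_x_zero_mult: "subst_x_zero (g * h) = subst_x_zero g * subst_x_zero h"
  by (simp add: poly_eq_iff coeff_subst_x_zero coeff_mult coeff_sum coeff_mult_0)

lemma subst_x_zero_add: "subst_x_zero (g + h) = subst_x_zero g + subst_x_zero h"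
  by (simp add: poly_eq_iff coeff_subst_x_zero)

lemma mem_ideal_x_iff: "g \<in> ideal_x \<longleftrightarrow> (\<forall>j. coeff (coeff g j) 0 = 0)"
  unfolding ideal_x_def by (simp add: poly_eq_iff coeff_subst_x_zero)

lemma is_prime_ideal_ideal_xy: "is_prime_ideal (ideal_xy :: 'k::field poly poly set)"
proof -
  have "(1 :: 'k poly poly) \<notin> ideal_xy" by (simp add: ideal_xy_def)
  then have "(ideal_xy :: 'k poly poly set) \<noteq> UNIV" by blast
  then show ?thesis
    unfolding is_prime_ideal_def is_ideal_def by (auto simp: ideal_xy_def coeff_mult_0)
qed

lemma is_prime_ideal_ideal_y: "is_prime_ideal (ideal_y :: 'k::field poly poly set)"
proof -
  have "(1 :: 'k poly poly) \<notin> ideal_y" by (simp add: ideal_y_def)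
  then have "(ideal_y :: 'k poly poly set) \<noteq> UNIV" by blast
  then show ?thesis
    unfolding is_prime_ideal_def is_ideal_def by (auto simp: ideal_y_def coeff_mult_0)
qed

lemma is_prime_ideal_ideal_x: "is_prime_ideal (ideal_x :: 'k::field poly poly set)"
proof -
  have "(1 :: 'k poly poly) \<notin> ideal_x" by (simp add: mem_ideal_x_iff)
  then have "(ideal_x :: 'k poly poly set) \<noteq> UNIV" by blast
  moreover have "(0 :: 'k poly poly) \<in> ideal_x" by (simp add: mem_ideal_x_iff)
  ultimately show ?thesis
    unfolding is_prime_ideal_def is_ideal_def
    by (auto simp: ideal_x_def subst_x_zero_mult subst_x_zero_add)
qed

lemma colon_monomial_ideal_eq_ideal_xy:
  assumes "upward_closed U" "\<not> U s t" "U (s + 1) t" "U s (t + 1)"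
  shows "colon (monomial_ideal U) (xy_monom s t) = (ideal_xy :: 'k::field poly poly set)"
proof (intro set_eqI iffI)
  fix g :: "'k poly poly"
  assume "g \<in> colon (monomial_ideal U) (xy_monom s t)"
  then have "coeff (coeff g 0) 0 \<noteq> 0 \<longrightarrow> U (0 + s) (0 + t)"
    unfolding mem_colon_xy_monom_iff by blast
  then show "g \<in> ideal_xy"
    using assms(2) by (simp add: ideal_xy_def)
next
  fix g :: "'k poly poly"
  assume g: "g \<in> ideal_xy"
  show "g \<in> colon (monomial_ideal U) (xy_monom s t)"
    unfolding mem_colon_xy_monom_iff
  proof (intro allI impI)
    fix i j
    assume "coeff (coeff g j) i \<noteq> 0"
    then have "1 \<le> i \<or> 1 \<le> j"
      using g by (cases i; cases j) (auto simp: ideal_xy_def)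
    then show "U (i + s) (j + t)"
      using upward_closedD[OF assms(1) assms(3)] upward_closedD[OF assms(1) assms(4)] by auto
  qed
qed

lemma colon_monomial_ideal_eq_ideal_x:
  assumes "upward_closed U" "\<And>j. \<not> U s j" "U (s + 1) t"
  shows "colon (monomial_ideal U) (xy_monom s t) = (ideal_x :: 'k::field poly poly set)"
proof (intro set_eqI iffI)
  fix g :: "'k poly poly"
  assume "g \<in> colon (monomial_ideal U) (xy_monom s t)"
  then have "coeff (coeff g j) 0 \<noteq> 0 \<longrightarrow> U (0 + s) (j + t)" for j
    unfolding mem_colon_xy_monom_iff by blast
  then show "g \<in> ideal_x"
    using assms(2) by (simp add: mem_ideal_x_iff)
next
  fix g :: "'k poly poly"
  assume g: "g \<in> ideal_x"
  show "g \<in> colon (monomial_ideal U) (xy_monom s t)"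
    unfolding mem_colon_xy_monom_iff
  proof (intro allI impI)
    fix i j
    assume "coeff (coeff g j) i \<noteq> 0"
    then have "1 \<le> i"
      using g by (cases i) (auto simp: mem_ideal_x_iff)
    then show "U (i + s) (j + t)"
      using upward_closedD[OF assms(1) assms(3)] by auto
  qed
qed

lemma colon_monomial_ideal_eq_ideal_y:
  assumes "upward_closed U" "\<And>i. \<not> U i t" "U s (t + 1)"
  shows "colon (monomial_ideal U) (xy_monom s t) = (ideal_y :: 'k::field poly poly set)"
proof (intro set_eqI iffI)
  fix g :: "'k poly poly"
  assume "g \<in> colon (monomial_ideal U) (xy_monom s t)"
  then have "coeff (coeff g 0) i \<noteq> 0 \<longrightarrow> U (i + s) (0 + t)" for i
    unfolding mem_colon_xy_monom_iff by blast
  then show "g \<in> ideal_y"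
    using assms(2) by (simp add: ideal_y_def poly_eq_iff)
next
  fix g :: "'k poly poly"
  assume g: "g \<in> ideal_y"
  show "g \<in> colon (monomial_ideal U) (xy_monom s t)"
    unfolding mem_colon_xy_monom_iff
  proof (intro allI impI)
    fix i j
    assume "coeff (coeff g j) i \<noteq> 0"
    then have "1 \<le> j"
      using g by (cases j) (auto simp: ideal_y_def)
    then show "U (i + s) (j + t)"
      using upward_closedD[OF assms(1) assms(3)] by auto
  qed
qed

lemma vnum_eq_Min:
  assumes "finite T" "T \<noteq> {}"
    and attained: "\<And>t. t \<in> T \<Longrightarrow> \<exists>f. homog t f \<and> colon J f \<in> Ass J"
    and bounded: "\<And>d f. homog d f \<Longrightarrow> colon J f \<in> Ass J \<Longrightarrow> \<exists>t\<in>T. t \<le> d"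
  shows "vnum J = Min T"
  unfolding vnum_def
proof (rule Least_equality)
  show "\<exists>f. homog (Min T) f \<and> colon J f \<in> Ass J"
    using attained Min_in[OF assms(1,2)] by blast
next
  fix d
  assume "\<exists>f. homog d f \<and> colon J f \<in> Ass J"
  then obtain t where "t \<in> T" "t \<le> d"
    using bounded by blast
  then show "Min T \<le> d"
    using Min_le[OF assms(1)] order_trans by blast
qed


subsection \<open>Staircases in two variables\<close>

locale staircase =
  fixes m :: nat and a b :: "nat \<Rightarrow> nat"
  assumes m_ge_1: "1 \<le> m"
    and a_strict_anti: "\<And>i j. 1 \<le> i \<Longrightarrow> i < j \<Longrightarrow> j \<le> m \<Longrightarrow> a i > a j"
    and b_strict_mono: "\<And>i j. 1 \<le> i \<Longrightarrow> i < j \<Longrightarrow> j \<le> m \<Longrightarrow> b i < b j"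
begin

definition in_stair :: "nat \<Rightarrow> nat \<Rightarrow> bool" where
  "in_stair i j \<longleftrightarrow> (\<exists>k\<in>{1..m}. a k \<le> i \<and> b k \<le> j)"

text \<open>The truncated subtractions are harmless: \<open>a i \<ge> 1\<close> for \<open>i < m\<close> and \<open>b i \<ge> 1\<close> for
  \<open>i > 1\<close>.\<close>

definition corner_degrees :: "nat set" where
  "corner_degrees =
     {a i + b (i + 1) - 2 | i. 1 \<le> i \<and> i \<le> m - 1}
     \<union> (if b 1 \<noteq> 0 then {a 1 + b 1 - 1} else {})
     \<union> (if a m \<noteq> 0 then {a m + b m - 1} else {})"

lemma ideal_gen_eq_monomial_ideal_in_stair:
  "ideal_gen {xy_monom (a i) (b i) | i. 1 \<le> i \<and> i \<le> m} =
     (monomial_ideal in_stair :: 'k::field poly poly set)"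
  using ideal_gen_xy_monoms[of a b "{1..m}"] by (simp add: in_stair_def[abs_def])

lemma upward_closed_in_stair: "upward_closed in_stair"
  unfolding upward_closed_def in_stair_def by (meson order_trans)

lemma in_stairI: "1 \<le> k \<Longrightarrow> k \<le> m \<Longrightarrow> a k \<le> i \<Longrightarrow> b k \<le> j \<Longrightarrow> in_stair i j"
  unfolding in_stair_def by auto

lemma a_antimono: "1 \<le> i \<Longrightarrow> i \<le> j \<Longrightarrow> j \<le> m \<Longrightarrow> a j \<le> a i"
  using a_strict_anti[of i j] by (cases "i = j") auto

lemma b_mono: "1 \<le> i \<Longrightarrow> i \<le> j \<Longrightarrow> j \<le> m \<Longrightarrow> b i \<le> b j"
  using b_strict_mono[of i j] by (cases "i = j") auto

lemma not_in_stair_if_less_a_last: "i < a m \<Longrightarrow> \<not> in_stair i j"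
  unfolding in_stair_def using a_antimono by fastforce

lemma not_in_stair_if_less_b_first: "j < b 1 \<Longrightarrow> \<not> in_stair i j"
  unfolding in_stair_def using b_mono by fastforce

lemma inner_corner_not_in_stair:
  assumes "1 \<le> l" "l \<le> m - 1"
  shows "\<not> in_stair (a l - 1) (b (l + 1) - 1)"
proof
  assume "in_stair (a l - 1) (b (l + 1) - 1)"
  then obtain k where k: "1 \<le> k" "k \<le> m" "a k \<le> a l - 1" "b k \<le> b (l + 1) - 1"
    unfolding in_stair_def by auto
  have "a (l + 1) < a l" "b l < b (l + 1)"
    using assms a_strict_anti b_strict_mono by auto
  show False
  proof (cases "k \<le> l")
    case True
    then have "a l \<le> a k"
      using k assms a_antimono[of k l] by simp
    then show False
      using k(3) \<open>a (l + 1) < a l\<close> by linarith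
  next
    case False
    then have "b (l + 1) \<le> b k"
      using k b_mono[of "l + 1" k] by simp
    then show False
      using k(4) \<open>b l < b (l + 1)\<close> by linarith
  qed
qed

lemma inner_corner:
  assumes "\<not> in_stair i j" "in_stair (i + 1) j" "in_stair i (j + 1)"
  shows "\<exists>l. 1 \<le> l \<and> l \<le> m - 1 \<and> a l = i + 1 \<and> b (l + 1) = j + 1"
proof -
  obtain k1 where k1: "1 \<le> k1" "k1 \<le> m" "a k1 \<le> i + 1" "b k1 \<le> j"
    using assms(2) unfolding in_stair_def by auto
  obtain k2 where k2: "1 \<le> k2" "k2 \<le> m" "a k2 \<le> i" "b k2 \<le> j + 1"
    using assms(3) unfolding in_stair_def by auto
  have a_k1: "a k1 = i + 1" and b_k2: "b k2 = j + 1"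
    using k1 k2 assms(1) in_stairI by (metis le_SucE add.commute plus_1_eq_Suc)+
  have "k1 < k2"
    using a_antimono[of k2 k1] k1 k2 a_k1 by (cases "k1 < k2") auto
  moreover have "\<not> k1 + 1 < k2"
  proof
    assume "k1 + 1 < k2"
    then have "a (k1 + 1) \<le> i" "b (k1 + 1) \<le> j"
      using a_strict_anti[of k1 "k1 + 1"] b_strict_mono[of "k1 + 1" k2] k1 k2 a_k1 b_k2 by auto
    then show False
      using assms(1) in_stairI[of "k1 + 1"] \<open>k1 + 1 < k2\<close> k1 k2 by auto
  qed
  ultimately have "k2 = k1 + 1" by simp
  then show ?thesis
    using k1 k2 a_k1 b_k2 by (intro exI[of _ k1]) auto
qed

lemma right_edge:
  assumes "\<not> in_stair i (j + b m)" "in_stair (i + 1) j"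
  shows "a m = i + 1 \<and> b m \<le> j"
proof -
  have "i < a m"
    using assms(1) in_stairI[of m i "j + b m"] m_ge_1 by force
  obtain k where k: "1 \<le> k" "k \<le> m" "a k \<le> i + 1" "b k \<le> j"
    using assms(2) unfolding in_stair_def by auto
  have "k = m"
    using a_strict_anti[of k m] k \<open>i < a m\<close> by fastforce
  then show ?thesis
    using k \<open>i < a m\<close> by simp
qed

lemma left_edge:
  assumes "\<not> in_stair (i + a 1) j" "in_stair i (j + 1)"
  shows "b 1 = j + 1 \<and> a 1 \<le> i"
proof -
  have "j < b 1"
    using assms(1) in_stairI[of 1 "i + a 1" j] m_ge_1 by force
  obtain k where k: "1 \<le> k" "k \<le> m" "a k \<le> i" "b k \<le> j + 1"
    using assms(2) unfolding in_stair_def by auto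
  have "k = 1"
    using b_strict_mono[of 1 k] k \<open>j < b 1\<close> by fastforce
  then show ?thesis
    using k \<open>j < b 1\<close> by simp
qed

lemma finite_corner_degrees: "finite corner_degrees"
proof -
  have "{a i + b (i + 1) - 2 | i. 1 \<le> i \<and> i \<le> m - 1} = (\<lambda>i. a i + b (i + 1) - 2) ` {1..m - 1}"
    by auto
  then show ?thesis
    unfolding corner_degrees_def by simp
qed

lemma corner_degrees_nonempty:
  assumes "\<not> in_stair 0 0"
  shows "corner_degrees \<noteq> {}"
proof (cases "b 1 = 0 \<and> a m = 0")
  case True
  then have "m \<noteq> 1"
    using assms in_stairI[of 1 0 0] by auto
  then have "a 1 + b (1 + 1) - 2 \<in> corner_degrees"
    unfolding corner_degrees_def using m_ge_1 by auto
  then show ?thesis by blast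
next
  case False
  then show ?thesis
    unfolding corner_degrees_def by auto
qed

lemma corner_degree_attained:
  assumes "t \<in> corner_degrees"
  shows "\<exists>f :: 'k::field poly poly. homog t f \<and> is_prime_ideal (colon (monomial_ideal in_stair) f)"
proof -
  note closed = upward_closed_in_stair
  consider (inner) l where "1 \<le> l" "l \<le> m - 1" "t = a l + b (l + 1) - 2"
    | (left) "b 1 \<noteq> 0" "t = a 1 + b 1 - 1"
    | (right) "a m \<noteq> 0" "t = a m + b m - 1"
    using assms unfolding corner_degrees_def by (auto split: if_splits)
  then show ?thesis
  proof cases
    case inner
    have "a (l + 1) < a l" "b l < b (l + 1)"
      using inner a_strict_anti b_strict_mono by auto
    then have "colon (monomial_ideal in_stair) (xy_monom (a l - 1) (b (l + 1) - 1)) = ideal_xy"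
      using inner inner_corner_not_in_stair in_stairI[of l] in_stairI[of "l + 1"]
      by (intro colon_monomial_ideal_eq_ideal_xy[OF closed]) auto
    moreover have "t = (a l - 1) + (b (l + 1) - 1)"
      using inner \<open>a (l + 1) < a l\<close> \<open>b l < b (l + 1)\<close> by linarith
    ultimately show ?thesis
      using homog_xy_monom is_prime_ideal_ideal_xy by metis
  next
    case left
    have "colon (monomial_ideal in_stair) (xy_monom (a 1) (b 1 - 1)) = ideal_y"
      using left m_ge_1 not_in_stair_if_less_b_first in_stairI[of 1]
      by (intro colon_monomial_ideal_eq_ideal_y[OF closed]) auto
    moreover have "t = a 1 + (b 1 - 1)"
      using left by simp
    ultimately show ?thesis
      using homog_xy_monom is_prime_ideal_ideal_y by metis
  next
    case right
    have "colon (monomial_ideal in_stair) (xy_monom (a m - 1) (b m)) = ideal_x"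
      using right m_ge_1 not_in_stair_if_less_a_last in_stairI[of m]
      by (intro colon_monomial_ideal_eq_ideal_x[OF closed]) auto
    moreover have "t = (a m - 1) + b m"
      using right by simp
    ultimately show ?thesis
      using homog_xy_monom is_prime_ideal_ideal_x by metis
  qed
qed

text \<open>Case split on which of x and y lie in the prime P = (I : f); at least one does, since
  P contains I.\<close>

lemma exists_corner_degree_le:
  fixes f :: "'k::field poly poly"
  assumes homog: "homog d f"
    and prime: "is_prime_ideal (colon (monomial_ideal in_stair) f)" (is "is_prime_ideal ?P")
  shows "\<exists>t\<in>corner_degrees. t \<le> d"
proof -
  have deg: "i + j = d" if "coeff (coeff f j) i \<noteq> 0" for i j
    using homog that unfolding homog_def by blast
  have mem: "xy_monom s t \<in> ?P \<longleftrightarrow> (\<forall>i j. coeff (coeff f j) i \<noteq> 0 \<longrightarrow> in_stair (i + s) (j + t))"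
    for s t
    by (rule xy_monom_mem_colon_iff)
  have ideal: "is_ideal (monomial_ideal in_stair :: 'k poly poly set)"
    by (rule is_ideal_monomial_ideal[OF upward_closed_in_stair])
  consider (xy) "xy_monom 1 0 \<in> ?P" "xy_monom 0 1 \<in> ?P"
    | (x) "xy_monom 1 0 \<in> ?P" "xy_monom 0 1 \<notin> ?P"
    | (y) "xy_monom 1 0 \<notin> ?P" "xy_monom 0 1 \<in> ?P"
    | (none) "xy_monom 1 0 \<notin> ?P" "xy_monom 0 1 \<notin> ?P"
    by blast
  then show ?thesis
  proof cases
    case xy
    have "f \<notin> monomial_ideal in_stair"
      using prime colon_eq_UNIV[OF ideal] unfolding is_prime_ideal_def by blast
    then obtain i j where ij: "coeff (coeff f j) i \<noteq> 0" "\<not> in_stair i j"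
      unfolding monomial_ideal_def by blast
    have "in_stair (i + 1) (j + 0)" "in_stair (i + 0) (j + 1)"
      using xy[unfolded mem] ij(1) by blast+
    then obtain l where l: "1 \<le> l" "l \<le> m - 1" "a l = i + 1" "b (l + 1) = j + 1"
      using inner_corner[OF ij(2)] by auto
    then have "a l + b (l + 1) - 2 \<in> corner_degrees"
      unfolding corner_degrees_def by blast
    moreover have "a l + b (l + 1) - 2 = d"
      using l(3,4) deg[OF ij(1)] by simp
    ultimately show ?thesis by auto
  next
    case x
    have "xy_monom 0 (b m) \<notin> ?P"
      using x xy_monom_mem_prime_ideal_iff[OF prime] by blast
    then obtain i j where ij: "coeff (coeff f j) i \<noteq> 0" "\<not> in_stair (i + 0) (j + b m)"
      unfolding mem by blast
    have "in_stair (i + 1) (j + 0)"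
      using x(1)[unfolded mem] ij(1) by blast
    then have "a m = i + 1" "b m \<le> j"
      using right_edge ij(2) by auto
    then have "a m + b m - 1 \<in> corner_degrees" "a m + b m - 1 \<le> d"
      using deg[OF ij(1)] unfolding corner_degrees_def by auto
    then show ?thesis by blast
  next
    case y
    have "xy_monom (a 1) 0 \<notin> ?P"
      using y xy_monom_mem_prime_ideal_iff[OF prime] by blast
    then obtain i j where ij: "coeff (coeff f j) i \<noteq> 0" "\<not> in_stair (i + a 1) (j + 0)"
      unfolding mem by blast
    have "in_stair (i + 0) (j + 1)"
      using y(2)[unfolded mem] ij(1) by blast
    then have "b 1 = j + 1" "a 1 \<le> i"
      using left_edge ij(2) by auto
    then have "a 1 + b 1 - 1 \<in> corner_degrees" "a 1 + b 1 - 1 \<le> d"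
      using deg[OF ij(1)] unfolding corner_degrees_def by auto
    then show ?thesis by blast
  next
    case none
    have "xy_monom (a 1) (b 1) \<in> monomial_ideal in_stair"
      using in_stairI[of 1] m_ge_1 by (auto simp: monomial_ideal_def coeff_xy_monom)
    then have "xy_monom (a 1) (b 1) \<in> ?P"
      using ideal_subset_colon[OF ideal] by blast
    then show ?thesis
      using none xy_monom_mem_prime_ideal_iff[OF prime] by blast
  qed
qed

lemma vnum_monomial_ideal_in_stair:
  assumes "\<not> in_stair 0 0"
  shows "vnum (monomial_ideal in_stair :: 'k::field poly poly set) = Min corner_degrees"
proof (rule vnum_eq_Min[OF finite_corner_degrees corner_degrees_nonempty[OF assms]])
  show "\<exists>f :: 'k poly poly. homog t f \<and> colon (monomial_ideal in_stair) f \<in> Ass (monomial_ideal in_stair)"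
    if "t \<in> corner_degrees" for t
    using corner_degree_attained[OF that] unfolding Ass_def by blast
  show "\<exists>t\<in>corner_degrees. t \<le> d"
    if "homog d f" "colon (monomial_ideal in_stair) f \<in> Ass (monomial_ideal in_stair)"
    for d and f :: "'k poly poly"
    using exists_corner_degree_le[OF that(1)] that(2) unfolding Ass_def by blast
qed

end

theorem theorem5p6:
  fixes I :: "'k::field poly poly set"
    and m :: nat and a b :: "nat \<Rightarrow> nat"
  assumes "m \<ge> 1"
    and "\<And>i j. 1 \<le> i \<Longrightarrow> i < j \<Longrightarrow> j \<le> m \<Longrightarrow> a i > a j"
    and "\<And>i j. 1 \<le> i \<Longrightarrow> i < j \<Longrightarrow> j \<le> m \<Longrightarrow> b i < b j"
    and "I = ideal_gen {xy_monom (a i) (b i) | i. 1 \<le> i \<and> i \<le> m}"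
    and "I \<noteq> UNIV"
  shows "vnum I =
    (let D = {a i + b (i + 1) - 2 | i. 1 \<le> i \<and> i \<le> m - 1} in
     if b 1 = 0 \<and> a m = 0 then Min D
     else if b 1 \<noteq> 0 \<and> a m = 0 then Min (insert (a 1 + b 1 - 1) D)
     else if b 1 = 0 \<and> a m \<noteq> 0 then Min (insert (a m + b m - 1) D)
     else Min (insert (a 1 + b 1 - 1) (insert (a m + b m - 1) D)))"
proof -
  interpret staircase m a b
    using assms(1-3) by unfold_locales
  have I: "I = monomial_ideal in_stair"
    using assms(4) ideal_gen_eq_monomial_ideal_in_stair by simp
  then have "\<not> in_stair 0 0"
    using assms(5) monomial_ideal_eq_UNIV_iff[OF upward_closed_in_stair] by blast
  then have "vnum I = Min corner_degrees"
    unfolding I by (rule vnum_monomial_ideal_in_stair)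
  then show ?thesis
    unfolding corner_degrees_def Let_def
    by (cases "b 1 = 0"; cases "a m = 0") (auto simp: insert_commute)
qed

end
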